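(* Let $K=\mathbb{Z}/3$ and let $G=\mathcal{C}_{2\ell}$ be a cycle of length $s=2\ell$ ($\ell\ge2$). Then $$\dim_K C_X(d)=\begin{cases}2^{s-2}, & \text{if } d\ge \ell-1,\\[2pt] \sum_{i\ge0}\binom{s}{d-2i}, & \text{if } 0\le d\le \ell-2,\end{cases}$$ where $\binom{s}{k}=0$ for $k<0$.
   Context: Let $G$ have vertex set $\{1,\dots,n\}$ and edges $e_1,\dots,e_s$, identified with variables of $S=K[t_1,\dots,t_s]$, $K$ a finite field. Let $X\subseteq\mathbb{P}^{s-1}$ be the image of the projective torus $\{(x_1:\dots:x_n): x_i\neq0\}\subseteq\mathbb{P}^{n-1}$ under the map whose $k$-th coordinate is $x_ix_j$ when $e_k=\{i,j\}$. Order $X=\{P_1,\dots,P_m\}$. For $d\ge0$, $C_X(d)\subseteq K^m$ is the image of the space $S_d$ of degree-$d$ forms under $f\mapsto \big(f(P_1)/t_1^d(P_1),\dots,f(P_m)/t_1^d(P_m)\big)$. *)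

theory Defs
  imports Complex_Main "HOL-Library.Function_Algebras"
begin

(* A graph G on vertices {1..n} with edges e_1..e_s is given by a function
   e :: nat => nat * nat, where e k = (i, j) is the edge {i,j} (for 1 <= k <= s).
   Points of K^N are functions nat => K (coordinates indexed from 1). *)

definition cycle_edge :: "nat \<Rightarrow> nat \<Rightarrow> nat \<times> nat" where
  "cycle_edge s k = (k, if k = s then 1 else k + 1)"

(* affine representatives of the projective torus in P^{n-1} *)
definition torus :: "nat \<Rightarrow> (nat \<Rightarrow> 'k::field) set" where
  "torus n = {x. (\<forall>i\<in>{1..n}. x i \<noteq> 0) \<and> (\<forall>i. i \<notin> {1..n} \<longrightarrow> x i = 0)}"

definition param_pt :: "(nat \<Rightarrow> nat \<times> nat) \<Rightarrow> nat \<Rightarrow> (nat \<Rightarrow> 'k::field) \<Rightarrow> (nat \<Rightarrow> 'k)" where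
  "param_pt e s x = (\<lambda>k. if k \<in> {1..s} then x (fst (e k)) * x (snd (e k)) else 0)"

definition proj_class :: "(nat \<Rightarrow> 'k::field) \<Rightarrow> (nat \<Rightarrow> 'k) set" where
  "proj_class v = {(\<lambda>k. c * v k) | c. c \<noteq> 0}"

(* X \<subseteq> P^{s-1}: image of the projective torus of P^{n-1} *)
definition projX :: "nat \<Rightarrow> nat \<Rightarrow> (nat \<Rightarrow> nat \<times> nat) \<Rightarrow> (nat \<Rightarrow> 'k::field) set set" where
  "projX n s e = proj_class ` (param_pt e s ` torus n)"

(* exponent vectors of monomials of degree d in t_1..t_s *)
definition monomials :: "nat \<Rightarrow> nat \<Rightarrow> (nat \<Rightarrow> nat) set" where
  "monomials s d = {\<alpha>. (\<forall>k. k \<notin> {1..s} \<longrightarrow> \<alpha> k = 0) \<and> (\<Sum>k=1..s. \<alpha> k) = d}"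

(* forms of degree d in S = K[t_1..t_s], given by their coefficients *)
definition forms :: "nat \<Rightarrow> nat \<Rightarrow> ((nat \<Rightarrow> nat) \<Rightarrow> 'k::field) set" where
  "forms s d = {c. \<forall>\<alpha>. \<alpha> \<notin> monomials s d \<longrightarrow> c \<alpha> = 0}"

definition eval_form :: "nat \<Rightarrow> nat \<Rightarrow> ((nat \<Rightarrow> nat) \<Rightarrow> 'k::field) \<Rightarrow> (nat \<Rightarrow> 'k) \<Rightarrow> 'k" where
  "eval_form s d c p = (\<Sum>\<alpha>\<in>monomials s d. c \<alpha> * (\<Prod>k=1..s. p k ^ \<alpha> k))"

definition rep :: "(nat \<Rightarrow> 'k) set \<Rightarrow> (nat \<Rightarrow> 'k)" where
  "rep P = (SOME p. p \<in> P)"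

(* C_X(d): the image of S_d under f |-> (f(P)/t_1^d(P))_{P \<in> X}; a codeword is
   represented as a function on X (extended by 0 outside X), i.e. an element of K^X \<cong> K^m *)
definition code :: "nat \<Rightarrow> nat \<Rightarrow> (nat \<Rightarrow> nat \<times> nat) \<Rightarrow> nat \<Rightarrow> ((nat \<Rightarrow> 'k::field) set \<Rightarrow> 'k) set" where
  "code n s e d = {(\<lambda>P. if P \<in> projX n s e
                         then eval_form s d c (rep P) / (rep P 1) ^ d else 0) | c. c \<in> forms s d}"

definition dimK :: "('a \<Rightarrow> 'k::field) set \<Rightarrow> nat" where
  "dimK V = vector_space.dim (\<lambda>(a::'k) f. (\<lambda>x. a * f x)) V"

end

theory Submission
  imports Defs
begin

text \<open>Normalise the points of \<open>X\<close> by \<open>t\<^sub>1 = 1\<close>. Over \<open>\<int>/3\<close> every nonzero element is a sign,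
  and on the even cycle the coordinates \<open>t\<^sub>k\<close>, \<open>k \<in> J = {2..s-1}\<close>, take every sign pattern in
  \<open>{1, -1}\<^sup>J\<close> while \<open>t\<^sub>s\<close> is their product. So the monomial \<open>t\<^sup>\<alpha>\<close> restricts to \<open>X\<close> as the
  character \<open>\<Prod>k\<in>U. t\<^sub>k\<close> of the sign group, \<open>U\<close> being the set of \<open>k \<in> J\<close> with \<open>\<alpha> k + \<alpha> s\<close> odd.
  Distinct characters are linearly independent because \<open>2 \<noteq> 0\<close>, hence \<open>dim C\<^sub>X(d)\<close> is the number
  of sets \<open>U\<close> arising in degree \<open>d\<close>, namely those with \<open>|U| \<le> d\<close> or \<open>|J - U| < d\<close>.\<close>

lemma two_neq_zero_if_card_UNIV_3:
  assumes "card (UNIV :: 'k::{field,finite} set) = 3"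
  shows "(2::'k) \<noteq> 0"
proof
  assume "(2::'k) = 0"
  hence minus_one: "(-1::'k) = 1"
    by (metis add_eq_0_iff2 one_add_one)
  have "{0, 1::'k} \<noteq> UNIV"
  proof
    assume "{0, 1::'k} = UNIV"
    hence "card (UNIV :: 'k set) = 2" by (metis card_2_iff zero_neq_one)
    thus False using assms by simp
  qed
  then obtain a :: 'k where a: "a \<notin> {0, 1}" by blast
  have "a + 1 \<notin> {0, 1, a}"
    using a minus_one by (auto simp: add_eq_0_iff2)
  hence "card {0, 1, a, a + 1::'k} = 4" using a by auto
  moreover have "card {0, 1, a, a + 1::'k} \<le> card (UNIV :: 'k set)" by (rule card_mono) auto
  ultimately show False using assms by simp
qed

lemma nonzero_eq_1_or_minus_1_if_card_UNIV_3:
  assumes "card (UNIV :: 'k::{field,finite} set) = 3" and "(x::'k) \<noteq> 0"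
  shows "x = 1 \<or> x = -1"
proof -
  have "(1::'k) \<noteq> -1"
    using two_neq_zero_if_card_UNIV_3[OF assms(1)] by (metis add_eq_0_iff2 one_add_one)
  hence "card {0, 1, -1::'k} = 3" by auto
  hence "{0, 1, -1::'k} = UNIV" using assms(1) by (metis card_subset_eq finite subset_UNIV)
  thus ?thesis using assms(2) by auto
qed

lemma square_eq_1_if_card_UNIV_3:
  assumes "card (UNIV :: 'k::{field,finite} set) = 3" and "(x::'k) \<noteq> 0"
  shows "x * x = 1"
  using nonzero_eq_1_or_minus_1_if_card_UNIV_3[OF assms] by auto

lemma power_eq_if_square_eq_1:
  assumes "u * u = (1::'k::monoid_mult)"
  shows "u ^ n = (if even n then 1 else u)"
proof -
  have "u ^ n = (u * u) ^ (n div 2) * u ^ (n mod 2)"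
    by (metis div_mult_mod_eq mult.commute power2_eq_square power_add power_mult)
  thus ?thesis using assms by (auto simp: odd_iff_mod_2_eq_one)
qed

lemma sum_Pow_insert_mult_prod:
  fixes c :: "'a set \<Rightarrow> 'k::comm_ring_1"
  assumes "finite I" and "a \<notin> I"
  shows "(\<Sum>T\<in>Pow (insert a I). c T * (\<Prod>k\<in>T. w k)) =
     (\<Sum>T\<in>Pow I. c T * (\<Prod>k\<in>T. w k)) + w a * (\<Sum>T\<in>Pow I. c (insert a T) * (\<Prod>k\<in>T. w k))"
proof -
  have "inj_on (insert a) (Pow I)" using assms(2) by (auto simp: inj_on_def)
  moreover have "Pow I \<inter> insert a ` Pow I = {}" using assms(2) by auto
  ultimately have "(\<Sum>T\<in>Pow (insert a I). c T * (\<Prod>k\<in>T. w k)) =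
      (\<Sum>T\<in>Pow I. c T * (\<Prod>k\<in>T. w k)) + (\<Sum>T\<in>Pow I. c (insert a T) * (\<Prod>k\<in>insert a T. w k))"
    unfolding Pow_insert using assms(1) by (simp add: sum.union_disjoint sum.reindex)
  also have "(\<Sum>T\<in>Pow I. c (insert a T) * (\<Prod>k\<in>insert a T. w k)) =
      w a * (\<Sum>T\<in>Pow I. c (insert a T) * (\<Prod>k\<in>T. w k))"
    unfolding sum_distrib_left
  proof (rule sum.cong[OF refl])
    fix T assume "T \<in> Pow I"
    hence "finite T" "a \<notin> T" using assms finite_subset by auto
    thus "c (insert a T) * (\<Prod>k\<in>insert a T. w k) = w a * (c (insert a T) * (\<Prod>k\<in>T. w k))"
      by simp
  qed
  finally show ?thesis .
qed

text \<open>Specialising the sign of the inserted element to \<open>1\<close> and \<open>-1\<close> and adding resp.\ subtracting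
  separates the subsets containing it from the others; dividing by \<open>2\<close> needs \<open>2 \<noteq> 0\<close>.\<close>

lemma sign_product_coeffs_eq_0:
  fixes c :: "nat set \<Rightarrow> 'k::field"
  assumes "finite I" and two: "(2::'k) \<noteq> 0"
    and "\<And>w. \<forall>k\<in>I. w k = 1 \<or> w k = -1 \<Longrightarrow> (\<Sum>T\<in>Pow I. c T * (\<Prod>k\<in>T. w k)) = 0"
    and "T \<in> Pow I"
  shows "c T = 0"
  using assms(1,3,4)
proof (induction I arbitrary: c T rule: finite_induct)
  case empty
  then show ?case by (auto dest: spec[of _ "\<lambda>_. 1"])
next
  case (insert a I)
  let ?S = "\<lambda>f w. \<Sum>T\<in>Pow I. f T * (\<Prod>k\<in>T. w k)"
  have vanish: "?S c w = 0 \<and> ?S (\<lambda>T. c (insert a T)) w = 0"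
    if w: "\<forall>k\<in>I. w k = 1 \<or> w k = -1" for w :: "nat \<Rightarrow> 'k"
  proof -
    have upd: "?S f (w(a := v)) = ?S f w" for f v
      using insert.hyps by (intro sum.cong refl arg_cong2[where f = "(*)"] prod.cong) auto
    have sums: "?S c w + v * ?S (\<lambda>T. c (insert a T)) w = 0" if "v = 1 \<or> v = -1" for v
    proof -
      have "\<forall>k\<in>insert a I. (w(a := v)) k = 1 \<or> (w(a := v)) k = -1" using w that by auto
      from insert.prems(1)[OF this] show ?thesis
        unfolding sum_Pow_insert_mult_prod[OF insert.hyps] upd fun_upd_same .
    qed
    from sums[of 1] sums[of "-1"] have "2 * ?S c w = 0" by (simp add: algebra_simps)
    with two sums[of 1] show ?thesis by simp
  qed
  show ?case
  proof (cases "a \<in> T")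
    case False
    hence "T \<in> Pow I" using insert.prems(2) by auto
    with vanish show ?thesis by (intro insert.IH[of c]) auto
  next
    case True
    hence "T - {a} \<in> Pow I" and "insert a (T - {a}) = T" using insert.prems(2) by auto
    with vanish insert.IH[of "\<lambda>T. c (insert a T)" "T - {a}"] show ?thesis by auto
  qed
qed

lemma card_subsets_card_le:
  assumes "finite J"
  shows "card {U. U \<subseteq> J \<and> card U \<le> d} = (\<Sum>j\<le>d. card J choose j)"
proof (induction d)
  case 0
  have "{U. U \<subseteq> J \<and> card U \<le> 0} = {U. U \<subseteq> J \<and> card U = 0}" by auto
  then show ?case using n_subsets[OF assms, of 0] by simp
next
  case (Suc d)
  have split: "{U. U \<subseteq> J \<and> card U \<le> Suc d} =
      {U. U \<subseteq> J \<and> card U \<le> d} \<union> {U. U \<subseteq> J \<and> card U = Suc d}"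
    by auto
  have "finite {U. U \<subseteq> J \<and> card U \<le> d}" "finite {U. U \<subseteq> J \<and> card U = Suc d}"
    using assms by (auto intro: finite_subset[of _ "Pow J"])
  then show ?case unfolding split using Suc n_subsets[OF assms, of "Suc d"]
    by (subst card_Un_disjoint) auto
qed

lemma card_subsets_card_less:
  assumes "finite J"
  shows "card {U. U \<subseteq> J \<and> card U < d} = (\<Sum>j<d. card J choose j)"
proof (cases d)
  case (Suc d')
  have "{U. U \<subseteq> J \<and> card U < d} = {U. U \<subseteq> J \<and> card U \<le> d'}" using Suc by auto
  then show ?thesis using card_subsets_card_le[OF assms, of d'] Suc by (simp add: lessThan_Suc_atMost)
qed simp

text \<open>Both sides count subsets of an \<open>(m+2)\<close>-set of size \<open>\<le> d\<close> and of the parity of \<open>d\<close>,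
  the right hand side after splitting off two points.\<close>

lemma sum_choose_same_parity:
  "(\<Sum>i\<in>{0..d div 2}. (m + 2) choose (d - 2 * i)) = (\<Sum>j\<le>d. m choose j) + (\<Sum>j<d. m choose j)"
proof (induction d rule: nat_induct2)
  case (step n)
  have "(\<Sum>i\<in>{0..(n + 2) div 2}. (m + 2) choose (n + 2 - 2 * i)) =
      ((m + 2) choose (n + 2)) + (\<Sum>i\<in>{0..n div 2}. (m + 2) choose (n - 2 * i))"
    by (simp add: atLeast0AtMost sum.atMost_Suc_shift del: sum.atMost_Suc)
  also have "(m + 2) choose (n + 2) = (m choose n) + 2 * (m choose (n + 1)) + (m choose (n + 2))"
    by (simp add: numeral_2_eq_2)
  finally show ?case using step by (simp add: numeral_2_eq_2 lessThan_Suc)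
qed simp_all

lemma card_subsets_small_or_cosmall:
  assumes "finite J" and "card J = 2 * m"
  shows "card {U. U \<subseteq> J \<and> (card U \<le> d \<or> card (J - U) < d)} =
    (if m \<le> d then 2 ^ (2 * m) else (\<Sum>i\<in>{0..d div 2}. (2 * m + 2) choose (d - 2 * i)))"
proof -
  have card_Diff: "card U + card (J - U) = 2 * m" if "U \<subseteq> J" for U
    using that assms by (metis card_Diff_subset card_mono finite_subset le_add_diff_inverse)
  show ?thesis
  proof (cases "m \<le> d")
    case True
    have "{U. U \<subseteq> J \<and> (card U \<le> d \<or> card (J - U) < d)} = Pow J"
    proof safe
      fix U assume "U \<subseteq> J" "\<not> card (J - U) < d"
      then show "card U \<le> d" using card_Diff[of U] True by linarith
    qed auto
    then show ?thesis using True card_Pow[OF assms(1)] assms(2) by simp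
  next
    case False
    let ?A = "{U. U \<subseteq> J \<and> card U \<le> d}" and ?B = "{U. U \<subseteq> J \<and> card (J - U) < d}"
    have split: "{U. U \<subseteq> J \<and> (card U \<le> d \<or> card (J - U) < d)} = ?A \<union> ?B" by auto
    have fin: "finite ?A" "finite ?B" using assms(1) by (auto intro: finite_subset[of _ "Pow J"])
    have disj: "?A \<inter> ?B = {}"
    proof safe
      fix U assume "U \<subseteq> J" "card U \<le> d" "card (J - U) < d"
      then show "U \<in> {}" using card_Diff[of U] False by linarith
    qed
    have "bij_betw (\<lambda>U. J - U) ?B {V. V \<subseteq> J \<and> card V < d}"
      by (rule bij_betw_byWitness[where f' = "\<lambda>V. J - V"]) (auto simp: double_diff)
    hence "card ?B = (\<Sum>j<d. card J choose j)"
      using card_subsets_card_less[OF assms(1)] by (simp add: bij_betw_same_card)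
    then show ?thesis
      unfolding split card_Un_disjoint[OF fin disj] card_subsets_card_le[OF assms(1)]
      using False assms(2) sum_choose_same_parity[of "2 * m" d] by simp
  qed
qed

interpretation pointwise: vector_space "\<lambda>(a::'k::field) (f::'a \<Rightarrow> 'k) x. a * f x"
  by unfold_locales (simp_all add: fun_eq_iff algebra_simps)

lemma sum_apply: "(\<Sum>a\<in>A. f a) x = (\<Sum>a\<in>A. f a x)"
  by (induct A rule: infinite_finite_induct) auto

lemma finite_monomials: "finite (monomials s d)"
proof (rule finite_subset)
  show "monomials s d \<subseteq> {\<alpha>. \<forall>k. (k \<in> {1..s} \<longrightarrow> \<alpha> k \<in> {0..d}) \<and> (k \<notin> {1..s} \<longrightarrow> \<alpha> k = 0)}"
  proof safe
    fix \<alpha> k assume "\<alpha> \<in> monomials s d" "k \<in> {1..s}"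
    then show "\<alpha> k \<in> {0..d}"
      unfolding monomials_def using member_le_sum[of k "{1..s}" \<alpha>] by auto
  qed (auto simp: monomials_def)
qed (intro finite_set_of_finite_funs; simp)

definition monomial_word ::
    "nat \<Rightarrow> nat \<Rightarrow> (nat \<Rightarrow> nat \<times> nat) \<Rightarrow> nat \<Rightarrow> (nat \<Rightarrow> nat) \<Rightarrow> (nat \<Rightarrow> 'k::field) set \<Rightarrow> 'k" where
  "monomial_word n s e d \<alpha> =
     (\<lambda>P. if P \<in> projX n s e then (\<Prod>k=1..s. rep P k ^ \<alpha> k) / rep P 1 ^ d else 0)"

lemma code_eq_image_forms:
  "(code n s e d :: ((nat \<Rightarrow> 'k::field) set \<Rightarrow> 'k) set) =
    (\<lambda>c. \<Sum>\<alpha>\<in>monomials s d. (\<lambda>P. c \<alpha> * monomial_word n s e d \<alpha> P)) ` forms s d"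
proof -
  have "(\<lambda>P. if P \<in> projX n s e then eval_form s d c (rep P) / rep P 1 ^ d else 0) =
      (\<Sum>\<alpha>\<in>monomials s d. (\<lambda>P. c \<alpha> * (monomial_word n s e d \<alpha> P :: 'k)))" for c
    unfolding sum_apply monomial_word_def eval_form_def
    by (auto simp: fun_eq_iff sum_divide_distrib)
  thus ?thesis unfolding code_def by (auto simp: Setcompr_eq_image)
qed

lemma code_eq_span:
  "(code n s e d :: ((nat \<Rightarrow> 'k::field) set \<Rightarrow> 'k) set) =
    pointwise.span (monomial_word n s e d ` monomials s d)"
proof -
  let ?M = "monomials s d" and ?w = "monomial_word n s e d :: _ \<Rightarrow> _ \<Rightarrow> 'k"
  define F where "F c = (\<Sum>\<alpha>\<in>?M. (\<lambda>P. c \<alpha> * ?w \<alpha> P))" for c :: "(nat \<Rightarrow> nat) \<Rightarrow> 'k::field"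
  have code_image: "code n s e d = F ` forms s d"
    unfolding code_eq_image_forms F_def ..
  show ?thesis
  proof
    show "code n s e d \<subseteq> pointwise.span (?w ` ?M)"
      unfolding code_image F_def
      by (auto intro!: pointwise.span_sum pointwise.span_scale[OF pointwise.span_base])
    show "pointwise.span (?w ` ?M) \<subseteq> code n s e d"
    proof
      fix f assume "f \<in> pointwise.span (?w ` ?M)"
      then show "f \<in> code n s e d"
      proof (induction rule: pointwise.span_induct_alt)
        case base
        have "0 = F (\<lambda>_. 0)" unfolding F_def by (simp add: fun_eq_iff sum_apply)
        moreover have "(\<lambda>_. 0) \<in> forms s d" unfolding forms_def by simp
        ultimately show ?case unfolding code_image by blast
      next
        case (step r v f)
        obtain \<alpha> where \<alpha>: "\<alpha> \<in> ?M" "v = ?w \<alpha>" using step.hyps by blast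
        obtain c where c: "c \<in> forms s d" "f = F c" using step.IH unfolding code_image by blast
        let ?c' = "\<lambda>\<beta>. c \<beta> + (if \<beta> = \<alpha> then r else 0)"
        have "(\<lambda>P. r * v P) + f = F ?c'"
        proof
          fix P
          have "F ?c' P = (\<Sum>\<beta>\<in>?M. c \<beta> * ?w \<beta> P) + (\<Sum>\<beta>\<in>?M. if \<beta> = \<alpha> then r * ?w \<beta> P else 0)"
            unfolding F_def sum_apply sum.distrib[symmetric] by (intro sum.cong) (auto simp: distrib_right)
          also have "\<dots> = f P + r * v P"
            using \<alpha> finite_monomials by (simp add: c F_def sum_apply)
          finally show "((\<lambda>P. r * v P) + f) P = F ?c' P" by simp
        qed
        moreover have "?c' \<in> forms s d" using c \<alpha> unfolding forms_def by auto
        ultimately show ?case unfolding code_image by blast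
      qed
    qed
  qed
qed

definition character :: "'p set \<Rightarrow> ('p \<Rightarrow> nat \<Rightarrow> 'k::field) \<Rightarrow> nat set \<Rightarrow> 'p \<Rightarrow> 'k" where
  "character X z T = (\<lambda>P. if P \<in> X then \<Prod>k\<in>T. z P k else 0)"

lemma character_coeffs_eq_0:
  fixes z :: "'p \<Rightarrow> nat \<Rightarrow> 'k::field"
  assumes "finite J" and "(2::'k) \<noteq> 0"
    and realize: "\<And>w. \<forall>k\<in>J. w k = 1 \<or> w k = -1 \<Longrightarrow> \<exists>P\<in>X. \<forall>k\<in>J. z P k = w k"
    and vanish: "\<And>P. (\<Sum>T\<in>Pow J. c T * character X z T P) = 0" and "T \<in> Pow J"
  shows "c T = 0"
proof (rule sign_product_coeffs_eq_0[OF assms(1,2) _ assms(5)])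
  fix w :: "nat \<Rightarrow> 'k" assume "\<forall>k\<in>J. w k = 1 \<or> w k = -1"
  then obtain P where "P \<in> X" "\<forall>k\<in>J. z P k = w k" using realize by blast
  hence "(\<Sum>T\<in>Pow J. c T * (\<Prod>k\<in>T. w k)) = (\<Sum>T\<in>Pow J. c T * character X z T P)"
    unfolding character_def by (intro sum.cong refl) (auto intro!: prod.cong)
  with vanish show "(\<Sum>T\<in>Pow J. c T * (\<Prod>k\<in>T. w k)) = 0" by simp
qed

lemma dim_span_characters:
  fixes z :: "'p \<Rightarrow> nat \<Rightarrow> 'k::field"
  assumes "finite J" and "(2::'k) \<noteq> 0"
    and realize: "\<And>w. \<forall>k\<in>J. w k = 1 \<or> w k = -1 \<Longrightarrow> \<exists>P\<in>X. \<forall>k\<in>J. z P k = w k"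
    and "A \<subseteq> Pow J"
  shows "pointwise.dim (pointwise.span (character X z ` A)) = card A"
proof -
  have coeffs: "c T = 0"
    if "\<And>P. (\<Sum>T\<in>Pow J. c T * character X z T P) = 0" and "T \<in> Pow J" for c T
    using assms(1,2) realize that by (rule character_coeffs_eq_0)
  have inj: "inj_on (character X z) (Pow J)"
  proof (rule inj_onI, rule ccontr)
    fix T1 T2 assume T: "T1 \<in> Pow J" "T2 \<in> Pow J" "character X z T1 = character X z T2" "T1 \<noteq> T2"
    let ?c = "\<lambda>T. (if T = T1 then 1 else 0) - (if T = T2 then 1 else 0) :: 'k"
    have sum_c: "(\<Sum>T\<in>Pow J. ?c T * character X z T P) = character X z T1 P - character X z T2 P" for P
    proof -
      have "(\<Sum>T\<in>Pow J. ?c T * character X z T P) = (\<Sum>T\<in>Pow J.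
          (if T = T1 then character X z T P else 0) - (if T = T2 then character X z T P else 0))"
        by (intro sum.cong) auto
      thus ?thesis using T assms(1) by (simp add: sum_subtractf)
    qed
    have "(\<Sum>T\<in>Pow J. ?c T * character X z T P) = 0" for P using sum_c T(3) by simp
    from coeffs[OF this T(1)] T(4) show False by simp
  qed
  have "pointwise.independent (character X z ` Pow J)"
  proof (rule pointwise.independent_if_scalars_zero)
    show "finite (character X z ` Pow J)" using assms(1) by simp
    fix f \<chi> assume sum: "(\<Sum>\<chi>\<in>character X z ` Pow J. (\<lambda>P. f \<chi> * \<chi> P)) = 0"
      and "\<chi> \<in> character X z ` Pow J"
    then obtain T where T: "T \<in> Pow J" "\<chi> = character X z T" by blast
    have "(\<Sum>T\<in>Pow J. f (character X z T) * character X z T P) = 0" for P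
      using fun_cong[OF sum, of P] by (simp add: sum.reindex[OF inj] sum_apply)
    from coeffs[OF this T(1)] show "f \<chi> = 0" using T(2) by simp
  qed
  hence "pointwise.independent (character X z ` A)"
    by (rule pointwise.independent_mono) (use assms(4) in blast)
  hence "pointwise.dim (pointwise.span (character X z ` A)) = card (character X z ` A)"
    by (rule pointwise.dim_span_eq_card_independent)
  also have "\<dots> = card A" using inj_on_subset[OF inj assms(4)] by (rule card_image)
  finally show ?thesis .
qed

definition affine_coord :: "(nat \<Rightarrow> 'k::field) set \<Rightarrow> nat \<Rightarrow> 'k" where
  "affine_coord P k = rep P k / rep P 1"

lemma rep_proj_class:
  obtains c where "c \<noteq> 0" and "rep (proj_class v) = (\<lambda>k. c * v k)"
proof -
  have "v \<in> proj_class v" unfolding proj_class_def by (auto intro: exI[of _ 1])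
  hence "rep (proj_class v) \<in> proj_class v" unfolding rep_def by (rule someI[where P = "\<lambda>p. p \<in> proj_class v"])
  with that show ?thesis unfolding proj_class_def by auto
qed

lemma affine_coord_proj_class:
  assumes "v 1 \<noteq> 0"
  shows "affine_coord (proj_class v) k = v k / v 1"
proof -
  obtain c where "c \<noteq> 0" "rep (proj_class v) = (\<lambda>k. c * v k)" by (rule rep_proj_class)
  with assms show ?thesis unfolding affine_coord_def by simp
qed

lemma monomial_word_eq_prod_affine_coord:
  assumes "P \<in> projX n s e" and "rep P 1 \<noteq> 0" and "\<alpha> \<in> monomials s d"
  shows "monomial_word n s e d \<alpha> P = (\<Prod>k=1..s. affine_coord P k ^ \<alpha> k)"
proof -
  have "d = (\<Sum>k=1..s. \<alpha> k)" using assms(3) unfolding monomials_def by simp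
  hence "rep P 1 ^ d = (\<Prod>k=1..s. rep P 1 ^ \<alpha> k)" by (simp add: power_sum)
  with assms(1) show ?thesis
    unfolding monomial_word_def affine_coord_def by (simp add: power_divide prod_dividef)
qed

lemma atLeastAtMost_1_eq_insert_ends:
  fixes s :: nat
  shows "2 \<le> s \<Longrightarrow> {1..s} = insert 1 (insert s {2..s-1})"
  by auto

lemma param_pt_cycle_edge:
  "param_pt (cycle_edge s) s x k = (if k \<in> {1..s} then x k * x (if k = s then 1 else k + 1) else 0)"
  unfolding param_pt_def cycle_edge_def by simp

text \<open>Every vertex of the cycle lies on exactly two of its edges.\<close>

lemma prod_param_pt_cycle_edge:
  "(\<Prod>k=1..s. param_pt (cycle_edge s) s x k) = (\<Prod>k=1..s. x k) ^ 2"
proof -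
  define \<sigma> where "\<sigma> k = (if k = s then 1 else k + 1)" for k :: nat
  have "inj_on \<sigma> {1..s}" "\<sigma> ` {1..s} \<subseteq> {1..s}" unfolding \<sigma>_def inj_on_def by auto
  hence "bij_betw \<sigma> {1..s} {1..s}" by (simp add: bij_betw_def endo_inj_surj)
  hence "(\<Prod>k=1..s. x (\<sigma> k)) = (\<Prod>k=1..s. x k)" by (rule prod.reindex_bij_betw)
  moreover have "(\<Prod>k=1..s. param_pt (cycle_edge s) s x k) = (\<Prod>k=1..s. x k * x (\<sigma> k))"
    unfolding param_pt_cycle_edge \<sigma>_def by (intro prod.cong) auto
  ultimately show ?thesis by (simp add: prod.distrib power2_eq_square)
qed

lemma cycle_point_rep_nonzero:
  assumes "P \<in> projX s s (cycle_edge s)" and "k \<in> {1..s}"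
  shows "rep P k \<noteq> 0"
proof -
  obtain x where x: "x \<in> torus s" and P: "P = proj_class (param_pt (cycle_edge s) s x)"
    using assms(1) unfolding projX_def by auto
  obtain c where "c \<noteq> 0" "rep P = (\<lambda>k. c * param_pt (cycle_edge s) s x k)"
    unfolding P by (rule rep_proj_class)
  with x assms(2) show ?thesis unfolding param_pt_cycle_edge torus_def by auto
qed

text \<open>Both sides equal \<open>r 1 * r s\<close>.\<close>

lemma last_ratio_eq_prod_ratios:
  fixes r :: "nat \<Rightarrow> 'k::field"
  assumes "even s" "2 \<le> s" and sq: "\<forall>k\<in>{1..s}. r k * r k = 1" and prod: "(\<Prod>k=1..s. r k) = 1"
  shows "r s / r 1 = (\<Prod>k\<in>{2..s-1}. r k / r 1)"
proof -
  let ?J = "{2..s-1}"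
  have r1: "r 1 * r 1 = 1" and rs: "r s * r s = 1" using sq assms(2) by auto
  have prod_split: "r 1 * (r s * (\<Prod>k\<in>?J. r k)) = 1"
    using prod assms(2) unfolding atLeastAtMost_1_eq_insert_ends[OF assms(2)] by simp
  have "(\<Prod>k\<in>?J. r k) = (r 1 * r 1) * (r s * r s) * (\<Prod>k\<in>?J. r k)" using r1 rs by simp
  also have "\<dots> = (r 1 * r s) * (r 1 * (r s * (\<Prod>k\<in>?J. r k)))" by (simp only: ac_simps)
  finally have prod_J: "(\<Prod>k\<in>?J. r k) = r 1 * r s" unfolding prod_split by simp
  have "(r 1 * r 1) ^ ((s - 2) div 2) = 1" using r1 by simp
  hence "r 1 ^ card ?J = 1" using assms(1,2) by (simp add: power_mult[symmetric] power2_eq_square[symmetric])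
  hence "(\<Prod>k\<in>?J. r k / r 1) = r 1 * r s" unfolding prod_dividef prod_J by simp
  moreover have "r 1 * r s * r 1 = r s" using r1 by (simp only: ac_simps) simp
  hence "r s / r 1 = r 1 * r s" using r1 by (auto simp: divide_eq_eq)
  ultimately show ?thesis by simp
qed

lemma cycle_last_affine_coord:
  assumes card3: "card (UNIV :: 'k::{field,finite} set) = 3"
    and "even s" "2 \<le> s" and P: "P \<in> (projX s s (cycle_edge s) :: (nat \<Rightarrow> 'k) set set)"
  shows "affine_coord P s = (\<Prod>k\<in>{2..s-1}. affine_coord P k)"
proof -
  obtain x where x: "x \<in> torus s" and P_eq: "P = proj_class (param_pt (cycle_edge s) s x)"
    using P unfolding projX_def by auto
  obtain c where c: "c \<noteq> 0" "rep P = (\<lambda>k. c * param_pt (cycle_edge s) s x k)"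
    unfolding P_eq by (rule rep_proj_class)
  have "(\<Prod>k=1..s. x k) \<noteq> 0" using x unfolding torus_def by auto
  hence "(\<Prod>k=1..s. param_pt (cycle_edge s) s x k) = 1"
    unfolding prod_param_pt_cycle_edge power2_eq_square by (rule square_eq_1_if_card_UNIV_3[OF card3])
  moreover have "c ^ s = 1"
    using assms(2) square_eq_1_if_card_UNIV_3[OF card3 c(1)]
    by (metis dvd_def power_mult power2_eq_square power_one)
  ultimately have "(\<Prod>k=1..s. rep P k) = 1" by (simp add: c(2) prod.distrib)
  moreover have "\<forall>k\<in>{1..s}. rep P k * rep P k = 1"
    using square_eq_1_if_card_UNIV_3[OF card3] cycle_point_rep_nonzero[OF P] by blast
  ultimately show ?thesis
    unfolding affine_coord_def using last_ratio_eq_prod_ratios[OF assms(2,3)] by blast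
qed

text \<open>The vertex weights \<open>x k = \<Prod>j\<in>{2..<k}. w j\<close> are signs, so \<open>x k * x (k + 1) = w k\<close>
  and \<open>x 1 * x 2 = 1\<close>.\<close>

lemma cycle_point_exists:
  fixes w :: "nat \<Rightarrow> 'k::field"
  assumes "2 \<le> s" and w: "\<forall>k\<in>{2..s-1}. w k = 1 \<or> w k = -1"
  shows "\<exists>P\<in>projX s s (cycle_edge s). \<forall>k\<in>{2..s-1}. affine_coord P k = w k"
proof -
  define x where "x k = (if k \<in> {1..s} then \<Prod>j\<in>{2..<k}. w j else 0)" for k
  let ?y = "param_pt (cycle_edge s) s x"
  have sign: "x k * x k = 1" if "k \<in> {1..s}" for k
  proof -
    have "x k * x k = (\<Prod>j\<in>{2..<k}. w j * w j)" using that by (simp add: x_def prod.distrib)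
    also have "\<dots> = 1"
    proof (intro prod.neutral ballI)
      fix j assume "j \<in> {2..<k}"
      hence "j \<in> {2..s-1}" using that by auto
      hence "w j = 1 \<or> w j = -1" using w by blast
      thus "w j * w j = 1" by auto
    qed
    finally show ?thesis .
  qed
  have "x k \<noteq> 0" if "k \<in> {1..s}" for k using sign[OF that] by auto
  moreover have "x k = 0" if "k \<notin> {1..s}" for k by (simp only: x_def if_not_P[OF that])
  ultimately have "x \<in> torus s" unfolding torus_def by blast
  hence "proj_class ?y \<in> projX s s (cycle_edge s)" unfolding projX_def by blast
  moreover have y1: "?y 1 = 1" using assms(1) by (simp add: param_pt_cycle_edge x_def)
  have "?y k = w k" if k: "k \<in> {2..s-1}" for k
  proof -
    have ks: "k \<in> {1..s}" "k + 1 \<in> {1..s}" "k \<noteq> s" "2 \<le> k" using k assms(1) by auto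
    hence "x (k + 1) = x k * w k" by (simp add: x_def prod.atLeastLessThan_Suc)
    moreover have "?y k = x k * x (k + 1)" using ks by (simp add: param_pt_cycle_edge)
    ultimately show ?thesis using sign[OF ks(1)] by (simp add: mult.assoc[symmetric])
  qed
  hence "affine_coord (proj_class ?y) k = w k" if "k \<in> {2..s-1}" for k
    using that y1 by (simp add: affine_coord_proj_class)
  ultimately show ?thesis by blast
qed

definition odd_support :: "nat \<Rightarrow> (nat \<Rightarrow> nat) \<Rightarrow> nat set" where
  "odd_support s \<alpha> = {k\<in>{2..s-1}. odd (\<alpha> k + \<alpha> s)}"

lemma monomial_word_cycle_eq_character:
  assumes card3: "card (UNIV :: 'k::{field,finite} set) = 3"
    and "even s" "2 \<le> s" and \<alpha>: "\<alpha> \<in> monomials s d"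
  shows "(monomial_word s s (cycle_edge s) d \<alpha> :: (nat \<Rightarrow> 'k) set \<Rightarrow> 'k) =
    character (projX s s (cycle_edge s)) affine_coord (odd_support s \<alpha>)"
proof
  fix P :: "(nat \<Rightarrow> 'k) set"
  let ?J = "{2..s-1}" and ?z = "affine_coord P"
  show "monomial_word s s (cycle_edge s) d \<alpha> P =
      character (projX s s (cycle_edge s)) affine_coord (odd_support s \<alpha>) P"
  proof (cases "P \<in> projX s s (cycle_edge s)")
    case False
    then show ?thesis by (simp add: monomial_word_def character_def)
  next
    case P: True
    have nonzero: "rep P k \<noteq> 0" if "k \<in> {1..s}" for k
      using cycle_point_rep_nonzero[OF P that] .
    have z1: "?z 1 = 1" using nonzero[of 1] assms(3) by (simp add: affine_coord_def)
    have "?z k * ?z k = 1" if "k \<in> ?J" for k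
    proof (rule square_eq_1_if_card_UNIV_3[OF card3])
      have "k \<in> {1..s}" "1 \<in> {1..s}" using that assms(3) by auto
      with nonzero show "?z k \<noteq> 0" by (simp add: affine_coord_def)
    qed
    hence parity: "?z k ^ n = (if even n then 1 else ?z k)" if "k \<in> ?J" for k n
      using that by (intro power_eq_if_square_eq_1) auto
    have "monomial_word s s (cycle_edge s) d \<alpha> P = (\<Prod>k=1..s. ?z k ^ \<alpha> k)"
      using P nonzero[of 1] assms(3) \<alpha> by (intro monomial_word_eq_prod_affine_coord) auto
    also have "\<dots> = ?z 1 ^ \<alpha> 1 * (?z s ^ \<alpha> s * (\<Prod>k\<in>?J. ?z k ^ \<alpha> k))"
      unfolding atLeastAtMost_1_eq_insert_ends[OF assms(3)] using assms(3) by simp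
    also have "\<dots> = (\<Prod>k\<in>?J. ?z k) ^ \<alpha> s * (\<Prod>k\<in>?J. ?z k ^ \<alpha> k)"
      by (simp only: z1 power_one mult_1_left cycle_last_affine_coord[OF card3 assms(2,3) P])
    also have "\<dots> = (\<Prod>k\<in>?J. ?z k ^ (\<alpha> k + \<alpha> s))"
      by (simp add: prod_power_distrib prod.distrib[symmetric] power_add mult.commute)
    also have "\<dots> = (\<Prod>k\<in>?J. if odd (\<alpha> k + \<alpha> s) then ?z k else 1)"
      using parity by (intro prod.cong) auto
    also have "\<dots> = (\<Prod>k\<in>odd_support s \<alpha>. ?z k)"
      unfolding odd_support_def by (rule prod.inter_filter[symmetric]) simp
    finally show ?thesis using P by (simp add: character_def)
  qed
qed

lemma dimK_code_cycle:
  assumes card3: "card (UNIV :: 'k::{field,finite} set) = 3" and "even s" "2 \<le> s"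
  shows "dimK (code s s (cycle_edge s) d :: ((nat \<Rightarrow> 'k) set \<Rightarrow> 'k) set) =
    card (odd_support s ` monomials s d)"
proof -
  let ?X = "projX s s (cycle_edge s) :: (nat \<Rightarrow> 'k) set set"
  have "(code s s (cycle_edge s) d :: ((nat \<Rightarrow> 'k) set \<Rightarrow> 'k) set) =
      pointwise.span (character ?X affine_coord ` odd_support s ` monomials s d)"
    unfolding code_eq_span image_image
    using monomial_word_cycle_eq_character[OF assms] by (simp cong: image_cong)
  moreover have "odd_support s ` monomials s d \<subseteq> Pow {2..s-1}"
    unfolding odd_support_def by auto
  ultimately show ?thesis
    unfolding dimK_def
    using dim_span_characters[OF _ two_neq_zero_if_card_UNIV_3[OF card3] cycle_point_exists[OF assms(3)]]
    by simp
qed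

lemma card_odd_support_le:
  assumes "2 \<le> s" and "\<alpha> \<in> monomials s d"
  shows "card (odd_support s \<alpha>) \<le> d \<or> card ({2..s-1} - odd_support s \<alpha>) < d"
proof -
  let ?J = "{2..s-1}"
  have card_odd: "card {k\<in>?J. odd (\<alpha> k)} \<le> sum \<alpha> ?J"
  proof -
    have "card {k\<in>?J. odd (\<alpha> k)} = (\<Sum>k\<in>{k\<in>?J. odd (\<alpha> k)}. 1)" by simp
    also have "\<dots> \<le> (\<Sum>k\<in>{k\<in>?J. odd (\<alpha> k)}. \<alpha> k)" by (rule sum_mono) (auto intro: odd_pos simp: Suc_le_eq)
    also have "\<dots> \<le> sum \<alpha> ?J" by (intro sum_mono2) auto
    finally show ?thesis .
  qed
  have "sum \<alpha> {1..s} = d" using assms(2) unfolding monomials_def by simp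
  hence sum_d: "\<alpha> 1 + (\<alpha> s + sum \<alpha> ?J) = d"
    unfolding atLeastAtMost_1_eq_insert_ends[OF assms(1)] using assms(1) by simp
  show ?thesis
  proof (cases "odd (\<alpha> s)")
    case False
    hence "odd_support s \<alpha> = {k\<in>?J. odd (\<alpha> k)}" unfolding odd_support_def by auto
    thus ?thesis using card_odd sum_d by auto
  next
    case True
    hence "?J - odd_support s \<alpha> = {k\<in>?J. odd (\<alpha> k)}" unfolding odd_support_def by auto
    moreover have "\<alpha> s \<ge> 1" using True by (cases "\<alpha> s") auto
    ultimately show ?thesis using card_odd sum_d by auto
  qed
qed

lemma odd_support_witness:
  assumes "2 \<le> s" and V: "V \<subseteq> {2..s-1}" and "card V + of_bool b \<le> d"
  shows "\<exists>\<alpha>\<in>monomials s d. odd_support s \<alpha> = (if b then {2..s-1} - V else V)"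
proof
  let ?J = "{2..s-1}"
  define \<alpha> where "\<alpha> k = (if k \<in> V then 1 else if k = s then of_bool b
      else if k = 1 then d - card V - of_bool b else 0)" for k
  have ends: "1 \<notin> V" "s \<notin> V" "1 \<noteq> s" using V assms(1) by auto
  have "sum \<alpha> ?J = (\<Sum>k\<in>?J. if k \<in> V then 1 else 0)"
    unfolding \<alpha>_def using assms(1) by (intro sum.cong) auto
  also have "\<dots> = card V" using V by (simp add: sum.If_cases Int_absorb1)
  finally have "sum \<alpha> {1..s} = d"
    unfolding atLeastAtMost_1_eq_insert_ends[OF assms(1)] using assms ends by (simp add: \<alpha>_def)
  moreover have "\<alpha> k = 0" if "k \<notin> {1..s}" for k using that V assms(1) unfolding \<alpha>_def by auto
  ultimately show "\<alpha> \<in> monomials s d" unfolding monomials_def by blast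
  show "odd_support s \<alpha> = (if b then ?J - V else V)"
    using V ends unfolding odd_support_def \<alpha>_def by auto
qed

lemma odd_support_image:
  assumes "2 \<le> s"
  shows "odd_support s ` monomials s d =
    {U. U \<subseteq> {2..s-1} \<and> (card U \<le> d \<or> card ({2..s-1} - U) < d)}"
proof (intro equalityI subsetI)
  fix U assume "U \<in> odd_support s ` monomials s d"
  then show "U \<in> {U. U \<subseteq> {2..s-1} \<and> (card U \<le> d \<or> card ({2..s-1} - U) < d)}"
    using card_odd_support_le[OF assms] by (auto simp: odd_support_def)
next
  fix U assume "U \<in> {U. U \<subseteq> {2..s-1} \<and> (card U \<le> d \<or> card ({2..s-1} - U) < d)}"
  hence U: "U \<subseteq> {2..s-1}" and small: "card U \<le> d \<or> card ({2..s-1} - U) < d" by auto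
  show "U \<in> odd_support s ` monomials s d"
  proof (cases "card U \<le> d")
    case True
    with odd_support_witness[OF assms U, of False] show ?thesis by auto
  next
    case False
    with small have "card ({2..s-1} - U) + of_bool True \<le> d" by simp
    from odd_support_witness[OF assms Diff_subset this] U show ?thesis
      by (auto simp: double_diff)
  qed
qed

theorem theorem2p5:
  fixes l d :: nat
  assumes "card (UNIV :: 'k set) = 3"
    and "l \<ge> 2"
  shows "dimK (code (2*l) (2*l) (cycle_edge (2*l)) d :: ((nat \<Rightarrow> 'k::{field,finite}) set \<Rightarrow> 'k) set)
           = (if d \<ge> l - 1 then 2 ^ (2*l - 2)
              else (\<Sum>i\<in>{0..d div 2}. (2*l) choose (d - 2*i)))"
proof -
  have s: "even (2 * l)" "2 \<le> 2 * l" using assms(2) by auto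
  have "card {2..2 * l - 1} = 2 * (l - 1)" and "2 * (l - 1) + 2 = 2 * l" and "2 * (l - 1) = 2 * l - 2"
    using assms(2) by auto
  thus ?thesis
    unfolding dimK_code_cycle[OF assms(1) s] odd_support_image[OF s(2)]
    using card_subsets_small_or_cosmall[of "{2..2 * l - 1}" "l - 1" d] by simp
qed

end
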